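(* Let $E$ be a $k$-dimensional subspace of $\mathbb{C}^n$ with $k>1$ such that $E$ does not contain the fully synchrony subspace $F=\{x_1=\cdots=x_n\}$. Then there exist one-dimensional subspaces $J_1,\dots,J_k$ of $E$, each special in $E$, such that $E=J_1\oplus\cdots\oplus J_k$.
   Context: A polydiagonal is a subspace of $\mathbb{C}^n$ of the form $\{x\in\mathbb{C}^n : x_i=x_j \text{ for all } (i,j)\in R\}$ for some (possibly empty) set $R$ of pairs of indices in $\{1,\dots,n\}$. For a subspace $W\subseteq\mathbb{C}^n$, $P(W)$ denotes the smallest polydiagonal containing $W$. Given a subspace $E$ of $\mathbb{C}^n$, a subspace $W$ of $E$ is called special in $E$ if for every subspace $U$ of $E$ with $\dim U=\dim W$ and $P(U)\subseteq P(W)$ one has $P(U)=P(W)$. *)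

theory Defs
  imports "HOL-Analysis.Analysis"
begin

text \<open>C^n is modelled as complex ^ 'n ('n a finite index type, n = CARD('n)),
 a vector space over the complex numbers via scalar multiplication (*s);
 subspaces/dimension are vec.subspace / vec.dim (complex-linear).\<close>

definition polydiagonal :: "(complex ^ 'n) set \<Rightarrow> bool" where
  "polydiagonal D \<longleftrightarrow> (\<exists>R :: ('n \<times> 'n) set. D = {x. \<forall>(i, j) \<in> R. x $ i = x $ j})"

definition polyP :: "(complex ^ 'n) set \<Rightarrow> (complex ^ 'n) set" where
  "polyP W = \<Inter> {D. polydiagonal D \<and> W \<subseteq> D}"

definition special_in :: "(complex ^ 'n) set \<Rightarrow> (complex ^ 'n) set \<Rightarrow> bool" where
  "special_in E W \<longleftrightarrow> vec.subspace W \<and> W \<subseteq> E \<and>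
     (\<forall>U. vec.subspace U \<and> U \<subseteq> E \<and> vec.dim U = vec.dim W \<and> polyP U \<subseteq> polyP W
          \<longrightarrow> polyP U = polyP W)"

definition full_synchrony :: "(complex ^ 'n) set" where
  "full_synchrony = {x. \<forall>i j. x $ i = x $ j}"

definition direct_sum_of :: "(complex ^ 'n) set \<Rightarrow> nat \<Rightarrow> (nat \<Rightarrow> (complex ^ 'n) set) \<Rightarrow> bool" where
  "direct_sum_of E k J \<longleftrightarrow>
     E = {(\<Sum>i<k. v i) | v. \<forall>i<k. v i \<in> J i} \<and>
     (\<forall>v w. (\<forall>i<k. v i \<in> J i \<and> w i \<in> J i) \<and> (\<Sum>i<k. v i) = (\<Sum>i<k. w i)
        \<longrightarrow> (\<forall>i<k. v i = w i))"

end

theory Submission imports Defs begin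

text \<open>For a nonzero v, the polydiagonal P(span v) is cut out exactly by the coincidence pattern
  of v, the pairs (i, j) with v i = v j; hence span v is special in E iff no nonzero vector of E
  has a strictly larger coincidence pattern. Such coincidence-maximal vectors span E: if v is
  not maximal, take u in E with a strictly larger pattern. As E does not contain the constant
  vectors, u has a pair (i, j) with u i \<noteq> u j, hence v i \<noteq> v j, and a suitable
  v + t u keeps the coincidences of v and gains (i, j). Both u and v + t u have strictly larger
  patterns than v, so induction on the number of non-coincidences shows that v lies in the span
  of maximal vectors. A basis of E chosen among maximal vectors gives the decomposition.\<close>

definition coincidences :: "complex ^ 'n \<Rightarrow> ('n \<times> 'n) set" where
  "coincidences v = {(i, j). v $ i = v $ j}"

definition polydiagonal_of :: "('n \<times> 'n) set \<Rightarrow> (complex ^ 'n) set" where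
  "polydiagonal_of R = {x. \<forall>(i, j) \<in> R. x $ i = x $ j}"

lemma polyP_span_singleton: "polyP (vec.span {v}) = polydiagonal_of (coincidences v)"
proof
  have "vec.subspace (polydiagonal_of (coincidences v))"
    unfolding vec.subspace_def polydiagonal_of_def by (auto split: prod.splits)
  moreover have "v \<in> polydiagonal_of (coincidences v)"
    by (auto simp: polydiagonal_of_def coincidences_def)
  ultimately have "vec.span {v} \<subseteq> polydiagonal_of (coincidences v)"
    by (simp add: vec.span_minimal)
  moreover have "polydiagonal (polydiagonal_of (coincidences v))"
    unfolding polydiagonal_def polydiagonal_of_def by blast
  ultimately show "polyP (vec.span {v}) \<subseteq> polydiagonal_of (coincidences v)"
    unfolding polyP_def by blast
next
  show "polydiagonal_of (coincidences v) \<subseteq> polyP (vec.span {v})"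
    unfolding polyP_def
  proof (rule Inter_greatest)
    fix D assume "D \<in> {D. polydiagonal D \<and> vec.span {v} \<subseteq> D}"
    then have "polydiagonal D" and span_sub: "vec.span {v} \<subseteq> D" by auto
    then obtain R where R: "D = {x. \<forall>(i, j) \<in> R. x $ i = x $ j}"
      unfolding polydiagonal_def by blast
    have "v \<in> D" using span_sub vec.span_base by blast
    then have "R \<subseteq> coincidences v" using R by (auto simp: coincidences_def)
    then show "polydiagonal_of (coincidences v) \<subseteq> D"
      using R by (auto simp: polydiagonal_of_def)
  qed
qed

lemma polydiagonal_of_coincidences_subset_iff:
  "polydiagonal_of (coincidences u) \<subseteq> polydiagonal_of (coincidences v)
     \<longleftrightarrow> coincidences v \<subseteq> coincidences u"
proof
  assume "polydiagonal_of (coincidences u) \<subseteq> polydiagonal_of (coincidences v)"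
  moreover have "u \<in> polydiagonal_of (coincidences u)"
    by (auto simp: polydiagonal_of_def coincidences_def)
  ultimately show "coincidences v \<subseteq> coincidences u"
    unfolding polydiagonal_of_def coincidences_def by blast
qed (auto simp: polydiagonal_of_def)

lemma dim_eq_1_imp_span_singleton:
  assumes "vec.subspace U" "vec.dim U = 1"
  obtains u where "u \<noteq> 0" "U = vec.span {u}"
proof -
  obtain B where B: "B \<subseteq> U" "vec.independent B" "U \<subseteq> vec.span B"
    using vec.maximal_independent_subset by blast
  have "card B = 1" using vec.basis_card_eq_dim[OF B(1) B(3) B(2)] assms(2) by simp
  then obtain u where u: "B = {u}" using card_1_singletonE by blast
  have "u \<noteq> 0" using B(2) u vec.dependent_zero by blast
  moreover have "vec.span B \<subseteq> U" using B(1) assms(1) vec.span_minimal by blast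
  ultimately show thesis using that B(3) u by blast
qed

lemma dim_span_singleton: "v \<noteq> 0 \<Longrightarrow> vec.dim (vec.span {v}) = 1"
  using vec.independent_insertI[of v "{}"] by (simp add: vec.span_empty vec.dim_span_eq_card_independent)

definition coincidence_maximal :: "(complex ^ 'n) set \<Rightarrow> complex ^ 'n \<Rightarrow> bool" where
  "coincidence_maximal E v \<longleftrightarrow> v \<in> E \<and> v \<noteq> 0 \<and>
     (\<forall>u\<in>E. u \<noteq> 0 \<and> coincidences v \<subseteq> coincidences u \<longrightarrow> coincidences u = coincidences v)"

lemma special_in_span_coincidence_maximal:
  assumes E: "vec.subspace E" and max: "coincidence_maximal E v"
  shows "special_in E (vec.span {v})"
proof -
  have "v \<in> E" and "v \<noteq> 0" using max by (auto simp: coincidence_maximal_def)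
  have "polyP U = polyP (vec.span {v})"
    if U: "vec.subspace U" "U \<subseteq> E" "vec.dim U = vec.dim (vec.span {v})"
      "polyP U \<subseteq> polyP (vec.span {v})" for U
  proof -
    have "vec.dim U = 1" using U(3) dim_span_singleton[OF \<open>v \<noteq> 0\<close>] by simp
    then obtain u where "u \<noteq> 0" and U_eq: "U = vec.span {u}"
      using dim_eq_1_imp_span_singleton U(1) by blast
    have "u \<in> E" using U(2) U_eq vec.span_base by blast
    have "coincidences v \<subseteq> coincidences u"
      using U(4) U_eq polyP_span_singleton polydiagonal_of_coincidences_subset_iff by metis
    then have "coincidences u = coincidences v"
      using max \<open>u \<in> E\<close> \<open>u \<noteq> 0\<close> unfolding coincidence_maximal_def by blast
    then show ?thesis using U_eq polyP_span_singleton by metis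
  qed
  moreover have "vec.span {v} \<subseteq> E" using \<open>v \<in> E\<close> E vec.span_minimal by blast
  ultimately show ?thesis unfolding special_in_def by auto
qed

lemma full_synchrony_subset_span_singleton:
  fixes u :: "complex ^ 'n"
  assumes "u \<in> full_synchrony" "u \<noteq> 0"
  shows "full_synchrony \<subseteq> vec.span {u}"
proof
  obtain i0 where i0: "u $ i0 \<noteq> 0" using assms(2) by (metis vec_eq_iff zero_index)
  fix x :: "complex ^ 'n" assume x: "x \<in> full_synchrony"
  have "x = (x $ i0 / u $ i0) *s u"
  proof (rule vec_eq_iff[THEN iffD2], rule allI)
    fix i
    have "x $ i = x $ i0" "u $ i = u $ i0"
      using x assms(1) unfolding full_synchrony_def by blast+
    then show "x $ i = ((x $ i0 / u $ i0) *s u) $ i" using i0 by simp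
  qed
  also have "\<dots> \<in> vec.span {u}" by (simp add: vec.span_base vec.span_scale)
  finally show "x \<in> vec.span {u}" .
qed

lemma coincidences_psubset_add_scaled:
  assumes "coincidences v \<subseteq> coincidences u" "u $ i \<noteq> u $ j" "v $ i \<noteq> v $ j"
  obtains t where "coincidences v \<subset> coincidences (v + t *s u)"
proof -
  define t where "t = (v $ j - v $ i) / (u $ i - u $ j)"
  have "coincidences v \<subseteq> coincidences (v + t *s u)"
    using assms(1) by (auto simp: coincidences_def)
  moreover have "(i, j) \<in> coincidences (v + t *s u)"
    using assms(2) by (simp add: coincidences_def t_def field_simps)
  moreover have "(i, j) \<notin> coincidences v" using assms(3) by (simp add: coincidences_def)
  ultimately show thesis using that by blast
qed

lemma card_Compl_coincidences_less:
  "coincidences v \<subset> coincidences w \<Longrightarrow> card (- coincidences w) < card (- coincidences v)"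
  by (simp add: psubset_card_mono)

lemma subset_span_coincidence_maximal:
  assumes E: "vec.subspace E" and not_sync: "\<not> full_synchrony \<subseteq> E"
  shows "E \<subseteq> vec.span {v. coincidence_maximal E v}"
proof
  fix v assume "v \<in> E"
  then show "v \<in> vec.span {v. coincidence_maximal E v}"
  proof (induction "card (- coincidences v)" arbitrary: v rule: less_induct)
    case less
    show ?case
    proof (cases "v = 0 \<or> coincidence_maximal E v")
      case True
      then show ?thesis by (auto simp: vec.span_zero vec.span_base)
    next
      case False
      with less.prems obtain u where u: "u \<in> E" "u \<noteq> 0" "coincidences v \<subset> coincidences u"
        unfolding coincidence_maximal_def by blast
      have "\<not> full_synchrony \<subseteq> vec.span {u}"
        using not_sync vec.span_minimal[OF _ E] u(1) by blast
      then obtain i j where "u $ i \<noteq> u $ j"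
        using full_synchrony_subset_span_singleton[OF _ u(2)] by (auto simp: full_synchrony_def)
      moreover then have "v $ i \<noteq> v $ j" using u(3) by (auto simp: coincidences_def)
      ultimately obtain t where "coincidences v \<subset> coincidences (v + t *s u)"
        using coincidences_psubset_add_scaled[of v u i j] u(3) by auto
      moreover have "v + t *s u \<in> E"
        using E less.prems u(1) vec.subspace_add vec.subspace_scale by blast
      ultimately have "v + t *s u \<in> vec.span {v. coincidence_maximal E v}"
        using less.hyps card_Compl_coincidences_less by blast
      moreover have "u \<in> vec.span {v. coincidence_maximal E v}"
        using less.hyps card_Compl_coincidences_less u(1,3) by blast
      ultimately have "(v + t *s u) - t *s u \<in> vec.span {v. coincidence_maximal E v}"
        by (intro vec.span_diff vec.span_scale)
      then show ?thesis by simp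
    qed
  qed
qed

lemma sum_span_singletons_unique:
  fixes f :: "nat \<Rightarrow> complex ^ 'n"
  assumes inj: "inj_on f {..<k}" and indep: "vec.independent (f ` {..<k})"
    and v: "\<forall>i<k. v i \<in> vec.span {f i}" and w: "\<forall>i<k. w i \<in> vec.span {f i}"
    and sum_eq: "(\<Sum>i<k. v i) = (\<Sum>i<k. w i)"
  shows "\<forall>i<k. v i = w i"
proof -
  have "\<exists>a. v i = a *s f i" "\<exists>b. w i = b *s f i" if "i < k" for i
    using v w that unfolding vec.span_singleton by blast+
  then obtain a b where a: "\<And>i. i < k \<Longrightarrow> v i = a i *s f i"
    and b: "\<And>i. i < k \<Longrightarrow> w i = b i *s f i" by metis
  define c where "c x = a (inv_into {..<k} f x) - b (inv_into {..<k} f x)" for x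
  have c_f: "c (f i) = a i - b i" if "i < k" for i
    unfolding c_def using inj that by simp
  have "(\<Sum>x\<in>f ` {..<k}. c x *s x) = (\<Sum>i<k. c (f i) *s f i)"
    using sum.reindex[OF inj] by simp
  also have "\<dots> = (\<Sum>i<k. v i - w i)"
    by (rule sum.cong) (simp_all add: a b c_f vector_sub_rdistrib)
  also have "\<dots> = 0" using sum_eq by (simp add: sum_subtractf)
  finally have sum0: "(\<Sum>x\<in>f ` {..<k}. c x *s x) = 0" .
  have "c (f i) = 0" if "i < k" for i
    using vec.independentD[OF indep _ order_refl sum0] that by simp
  then show ?thesis using a b c_f by auto
qed

lemma direct_sum_of_span_singletons:
  assumes "inj_on f {..<k}" and "vec.independent (f ` {..<k})"
  shows "direct_sum_of (vec.span (f ` {..<k})) k (\<lambda>i. vec.span {f i})"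
proof -
  have "vec.span (f ` {..<k}) = {(\<Sum>i<k. v i) | v. \<forall>i<k. v i \<in> vec.span {f i}}"
  proof (intro equalityI subsetI)
    fix x assume "x \<in> vec.span (f ` {..<k})"
    then obtain c where "x = (\<Sum>y\<in>f ` {..<k}. c y *s y)"
      using vec.span_finite[of "f ` {..<k}"] by auto
    then have "x = (\<Sum>i<k. c (f i) *s f i)" using sum.reindex[OF assms(1)] by simp
    moreover have "\<forall>i<k. c (f i) *s f i \<in> vec.span {f i}"
      by (simp add: vec.span_base vec.span_scale)
    ultimately show "x \<in> {(\<Sum>i<k. v i) | v. \<forall>i<k. v i \<in> vec.span {f i}}" by blast
  next
    fix x assume "x \<in> {(\<Sum>i<k. v i) | v. \<forall>i<k. v i \<in> vec.span {f i}}"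
    moreover have "vec.span {f i} \<subseteq> vec.span (f ` {..<k})" if "i < k" for i
      using that by (simp add: vec.span_mono)
    ultimately show "x \<in> vec.span (f ` {..<k})"
      by (auto intro: vec.span_sum)
  qed
  then show ?thesis
    unfolding direct_sum_of_def using sum_span_singletons_unique[OF assms] by blast
qed

lemma basis_of_coincidence_maximal:
  assumes "vec.subspace E" "\<not> full_synchrony \<subseteq> E"
  obtains B where "B \<subseteq> {v. coincidence_maximal E v}" "vec.independent B" "vec.span B = E"
proof -
  let ?M = "{v. coincidence_maximal E v}"
  obtain B where B: "B \<subseteq> ?M" "vec.independent B" "?M \<subseteq> vec.span B"
    using vec.maximal_independent_subset by blast
  have "?M \<subseteq> E" by (auto simp: coincidence_maximal_def)
  then have "vec.span B \<subseteq> E"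
    using B(1) assms(1) vec.span_minimal by blast
  moreover have "E \<subseteq> vec.span B"
    using subset_span_coincidence_maximal[OF assms] B(3) vec.span_minimal vec.subspace_span by blast
  ultimately show thesis using that B(1,2) by blast
qed

theorem mainTheorem3:
  fixes E :: "(complex ^ 'n) set" and k :: nat
  assumes "vec.subspace E"
    and "vec.dim E = k"
    and "k > 1"
    and "\<not> full_synchrony \<subseteq> E"
  shows "\<exists>J :: nat \<Rightarrow> (complex ^ 'n) set.
           (\<forall>i<k. vec.subspace (J i) \<and> J i \<subseteq> E \<and> vec.dim (J i) = 1 \<and> special_in E (J i))
           \<and> direct_sum_of E k J"
proof -
  obtain B where B: "B \<subseteq> {v. coincidence_maximal E v}" "vec.independent B" "vec.span B = E"
    using basis_of_coincidence_maximal assms(1,4) by blast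
  have "card B = k" using B(2,3) assms(2) vec.dim_span_eq_card_independent by metis
  then obtain f where f: "bij_betw f {..<k} B"
    using ex_bij_betw_nat_finite[OF vec.finiteI_independent[OF B(2)]] by (metis lessThan_atLeast0)
  then have max: "coincidence_maximal E (f i)" if "i < k" for i
    using B(1) that bij_betwE by blast
  have "direct_sum_of E k (\<lambda>i. vec.span {f i})"
    using direct_sum_of_span_singletons[of f k] f B(2,3) by (simp add: bij_betw_def)
  moreover have "vec.span {f i} \<subseteq> E \<and> vec.dim (vec.span {f i}) = 1" if "i < k" for i
    using max[OF that] assms(1) vec.span_minimal[of "{f i}" E] dim_span_singleton
    by (auto simp: coincidence_maximal_def)
  ultimately show ?thesis
    using special_in_span_coincidence_maximal[OF assms(1) max] vec.subspace_span
    by (intro exI[of _ "\<lambda>i. vec.span {f i}"]) blast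
qed

end
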